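(* The class of finite tournaments has the Rank Property: for every countable ordinal $\alpha$ there is a countable tournament $X$ with $\mathsf{rk}(X)=\alpha$.
   Context: A tournament is a structure $(T,\to)$ with a binary relation $\to$ such that for any two distinct $u,v$ exactly one of $u\to v$, $v\to u$ holds (and no loops). Let $\mathcal F$ be the class of finite tournaments; countable tournaments are the structures considered. Substructures are induced sub-tournaments, $\mathsf{age}(X)$ is the set of finite sub-tournaments of $X$. For $A\le B$, $B$ is a prime extension of $A$ if $|B\setminus A|=1$; a realization of $B$ in $X$ (where $A\le X$) is $C\le X$ with $A\le C$ and an isomorphism $B\to C$ fixing $A$ pointwise. For $F\in\mathsf{age}(X)$ define by recursion: $\mathsf{rk}_X(F)\ge0$ always; $\mathsf{rk}_X(F)\ge\alpha+1$ iff every prime extension $B\in\mathcal F$ of $F$ has a realization $C$ in $X$ with $\mathsf{rk}_X(C)\ge\alpha$; for limit $\alpha$, $\mathsf{rk}_X(F)\ge\alpha$ iff $\mathsf{rk}_X(F)\ge\beta$ for all $\beta<\alpha$. $\mathsf{rk}_X(F)=\sup\{\alpha:\mathsf{rk}_X(F)\ge\alpha\}$ (or $\infty$ if this holds for all ordinals), and $\mathsf{rk}(X)=\mathsf{rk}_X(\emptyset)$. *)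

theory Defs
  imports Main "HOL-Library.Countable_Set"
begin

definition tournament :: "'v set \<Rightarrow> ('v \<Rightarrow> 'v \<Rightarrow> bool) \<Rightarrow> bool" where
  "tournament V E \<longleftrightarrow> (\<forall>v\<in>V. \<not> E v v) \<and>
     (\<forall>u\<in>V. \<forall>v\<in>V. u \<noteq> v \<longrightarrow> (E u v \<longleftrightarrow> \<not> E v u))"

text \<open>age(X): finite induced sub-tournaments, identified with their (finite) vertex sets.\<close>
definition in_age :: "'v set \<Rightarrow> 'v set \<Rightarrow> bool" where
  "in_age V F \<longleftrightarrow> finite F \<and> F \<subseteq> V"

text \<open>A prime extension B of the sub-tournament (F, E|F): a tournament EB on the vertex set
  Some ` F \<union> {None} (one new vertex None) which induces E on the copy Some ` F of F.\<close>
definition prime_ext :: "('v \<Rightarrow> 'v \<Rightarrow> bool) \<Rightarrow> 'v set \<Rightarrow> ('v option \<Rightarrow> 'v option \<Rightarrow> bool) \<Rightarrow> bool" where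
  "prime_ext E F EB \<longleftrightarrow> tournament (insert None (Some ` F)) EB \<and>
     (\<forall>a\<in>F. \<forall>b\<in>F. EB (Some a) (Some b) \<longleftrightarrow> E a b)"

definition realization :: "'v set \<Rightarrow> ('v \<Rightarrow> 'v \<Rightarrow> bool) \<Rightarrow> 'v set \<Rightarrow> ('v option \<Rightarrow> 'v option \<Rightarrow> bool) \<Rightarrow> 'v set \<Rightarrow> bool" where
  "realization V E F EB C \<longleftrightarrow> C \<subseteq> V \<and> F \<subseteq> C \<and>
     (\<exists>h. bij_betw h (insert None (Some ` F)) C \<and> (\<forall>a\<in>F. h (Some a) = a) \<and>
        (\<forall>x\<in>insert None (Some ` F). \<forall>y\<in>insert None (Some ` F). EB x y \<longleftrightarrow> E (h x) (h y)))"

text \<open>One step of the rank recursion along a well-order r. The point i of Field r stands for the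
  ordinal otype(underS r i). f j is the set of F in age(X) with rk_X(F) \<ge> (ordinal of j).\<close>
definition rk_step :: "'i rel \<Rightarrow> 'v set \<Rightarrow> ('v \<Rightarrow> 'v \<Rightarrow> bool) \<Rightarrow> ('i \<Rightarrow> 'v set set) \<Rightarrow> 'i \<Rightarrow> 'v set set" where
  "rk_step r V E f i =
     (if underS r i = {} then {F. in_age V F}
      else if (\<exists>p\<in>underS r i. \<forall>q\<in>underS r i. (q, p) \<in> r) then
        (let p = (THE p. p \<in> underS r i \<and> (\<forall>q\<in>underS r i. (q, p) \<in> r)) in
          {F. in_age V F \<and> (\<forall>EB. prime_ext E F EB \<longrightarrow> (\<exists>C. realization V E F EB C \<and> C \<in> f p))})
      else {F. in_age V F \<and> (\<forall>j\<in>underS r i. F \<in> f j)})"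

definition rk_ge :: "'i rel \<Rightarrow> 'v set \<Rightarrow> ('v \<Rightarrow> 'v \<Rightarrow> bool) \<Rightarrow> 'i \<Rightarrow> 'v set \<Rightarrow> bool" where
  "rk_ge r V E i F \<longleftrightarrow> F \<in> wfrec (r - Id) (rk_step r V E) i"

definition wo_succ :: "'i rel \<Rightarrow> 'i \<Rightarrow> 'i" where
  "wo_succ r i = (THE j. j \<in> aboveS r i \<and> (\<forall>k\<in>aboveS r i. (j, k) \<in> r))"

text \<open>rk(X) = otype(underS r i): rk_X(\<emptyset>) \<ge> that ordinal but not \<ge> its successor.\<close>
definition rank_eq :: "'i rel \<Rightarrow> 'v set \<Rightarrow> ('v \<Rightarrow> 'v \<Rightarrow> bool) \<Rightarrow> 'i \<Rightarrow> bool" where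
  "rank_eq r V E i \<longleftrightarrow> rk_ge r V E i {} \<and> \<not> rk_ge r V E (wo_succ r i) {}"

end

theory Submission
  imports Defs "HOL-Library.Sublist" "HOL-Library.List_Lexorder" "HOL-Library.Product_Lexorder"
begin

(* Ordinals are the points of the well-order r, and wo_add r b n is b + n.  Ranks 0 and 1 are
   attained by the empty and the one-vertex tournament.  For larger i, consider the tree of
   finite sequences whose labels decrease strictly inside the open interval (0, i): a node
   beats a proper prefix according to a bit stored in its last entry, and incomparable nodes
   are ordered lexicographically.  Appending a child labelled p realizes any one-point type
   over the prefixes of a node and keeps rank p, so the prefix set of t has rank at least
   label t and the empty set has rank at least i.  Conversely, a 3-cycle through two
   incomparable nodes forces the third node to be a common prefix of both, so the type
   "beat u and nothing else" is realizable only finitely often; together with the strict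
   decrease of labels this bounds the rank of a set of prefixes of t by
   label t + (number of missing prefixes), whence the empty set does not have rank i + 1.
   Rank is invariant under isomorphism, so the tree can be copied onto a set of naturals. *)

abbreviation wo_add :: "'i rel \<Rightarrow> 'i \<Rightarrow> nat \<Rightarrow> 'i" where
  "wo_add r b n \<equiv> (wo_succ r ^^ n) b"

definition wo_zero :: "'i rel \<Rightarrow> 'i" where
  "wo_zero r = wo_rel.minim r (Field r)"

context wo_rel
begin

lemma refl_r: "x \<in> Field r \<Longrightarrow> (x, x) \<in> r"
  using REFL by (auto simp: refl_on_def)

lemma trans_r: "(x, y) \<in> r \<Longrightarrow> (y, z) \<in> r \<Longrightarrow> (x, z) \<in> r"
  using TRANS by (auto dest: transD)

lemma antisym_r: "(x, y) \<in> r \<Longrightarrow> (y, x) \<in> r \<Longrightarrow> x = y"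
  using ANTISYM by (auto dest: antisymD)

lemma le_less_trans_r: "(x, y) \<in> r \<Longrightarrow> (y, z) \<in> r \<Longrightarrow> y \<noteq> z \<Longrightarrow> (x, z) \<in> r \<and> x \<noteq> z"
  using trans_r antisym_r by blast

lemma less_le_trans_r: "(x, y) \<in> r \<Longrightarrow> x \<noteq> y \<Longrightarrow> (y, z) \<in> r \<Longrightarrow> (x, z) \<in> r \<and> x \<noteq> z"
  using trans_r antisym_r by blast

lemma not_le_imp_less_r: "x \<in> Field r \<Longrightarrow> y \<in> Field r \<Longrightarrow> (y, x) \<notin> r \<Longrightarrow> (x, y) \<in> r \<and> x \<noteq> y"
  using TOTALS refl_r by blast

lemma wo_succ_eq_minim: "wo_succ r x = minim (aboveS x)"
  by (simp add: wo_succ_def minim_def isMinim_def)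

lemma aboveS_subset_Field: "aboveS x \<subseteq> Field r"
  by (auto simp: aboveS_def Field_def)

lemma wo_succ_aboveS: "aboveS x \<noteq> {} \<Longrightarrow> wo_succ r x \<in> aboveS x"
  unfolding wo_succ_eq_minim using minim_in aboveS_subset_Field by blast

lemma wo_succ_least: "(x, y) \<in> r \<Longrightarrow> x \<noteq> y \<Longrightarrow> (wo_succ r x, y) \<in> r"
  unfolding wo_succ_eq_minim using minim_least aboveS_subset_Field by (simp add: aboveS_def)

lemma wo_succ_greater:
  assumes "aboveS x \<noteq> {}"
  shows "(x, wo_succ r x) \<in> r \<and> x \<noteq> wo_succ r x"
  using wo_succ_aboveS[OF assms] unfolding aboveS_def by auto

lemma underS_wo_succ:
  assumes "aboveS x \<noteq> {}" and "x \<in> Field r"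
  shows "underS (wo_succ r x) = insert x (underS x)"
proof -
  have "(y, x) \<in> r" if "(y, wo_succ r x) \<in> r" "y \<noteq> wo_succ r x" for y
  proof (rule ccontr)
    assume "(y, x) \<notin> r"
    then have "(x, y) \<in> r \<and> x \<noteq> y"
      using not_le_imp_less_r assms(2) that(1) by (auto simp: Field_def)
    then show False
      using wo_succ_least that antisym_r by blast
  qed
  moreover have "(y, wo_succ r x) \<in> r \<and> y \<noteq> wo_succ r x" if "(y, x) \<in> r" for y
    using that le_less_trans_r wo_succ_greater[OF assms(1)] by blast
  ultimately show ?thesis
    using refl_r[OF assms(2)] by (auto simp: underS_def)
qed

lemma wo_succ_mono: "(x, y) \<in> r \<Longrightarrow> aboveS y \<noteq> {} \<Longrightarrow> (wo_succ r x, wo_succ r y) \<in> r"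
  by (metis wo_succ_greater wo_succ_least trans_r)

lemma wo_succ_strict_mono:
  "(x, y) \<in> r \<Longrightarrow> x \<noteq> y \<Longrightarrow> aboveS y \<noteq> {} \<Longrightarrow> (wo_succ r x, wo_succ r y) \<in> r \<and> wo_succ r x \<noteq> wo_succ r y"
  by (metis antisym_r wo_succ_greater wo_succ_least trans_r)

lemma the_greatest_underS:
  assumes "p \<in> underS j" and "\<forall>q\<in>underS j. (q, p) \<in> r"
  shows "(THE p. p \<in> underS j \<and> (\<forall>q\<in>underS j. (q, p) \<in> r)) = p"
  by (rule the_equality) (use assms antisym_r in auto)

lemma zero_succ_limit_cases:
  obtains (zero) "underS j = {}"
  | (succ) p where "p \<in> underS j" "\<forall>q\<in>underS j. (q, p) \<in> r" "j = wo_succ r p"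
      "aboveS p \<noteq> {}" "p \<in> Field r"
  | (limit) "underS j \<noteq> {}" "\<not> (\<exists>p\<in>underS j. \<forall>q\<in>underS j. (q, p) \<in> r)"
proof -
  consider "underS j = {}"
    | p where "p \<in> underS j" "\<forall>q\<in>underS j. (q, p) \<in> r"
    | "underS j \<noteq> {}" "\<not> (\<exists>p\<in>underS j. \<forall>q\<in>underS j. (q, p) \<in> r)"
    by blast
  then show thesis
  proof cases
    case (2 p)
    have "aboveS p \<noteq> {}" "p \<in> Field r"
      using 2(1) by (auto simp: underS_def aboveS_def Field_def)
    moreover have "wo_succ r p = j"
    proof -
      have "(wo_succ r p, j) \<in> r"
        using 2(1) wo_succ_least by (auto simp: underS_def)
      moreover have "wo_succ r p \<notin> underS j"
        using 2(2) wo_succ_greater[OF \<open>aboveS p \<noteq> {}\<close>] antisym_r by blast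
      ultimately show ?thesis by (auto simp: underS_def)
    qed
    ultimately show thesis using succ 2 by metis
  qed (use zero limit in blast)+
qed

lemma wo_zero_least: "x \<in> Field r \<Longrightarrow> (wo_zero r, x) \<in> r"
  unfolding wo_zero_def using minim_least by blast

lemma underS_wo_zero: "underS (wo_zero r) = {}"
  using wo_zero_least antisym_r by (auto simp: underS_def Field_def)

lemma underS_nonempty_iff: "x \<in> Field r \<Longrightarrow> underS x \<noteq> {} \<longleftrightarrow> x \<noteq> wo_zero r"
  using wo_zero_least[of x] underS_wo_zero by (auto simp: underS_def)

end

locale wo_bounded = wo_rel r for r :: "'i rel" +
  fixes i :: 'i
  assumes i_in_Field: "i \<in> Field r" and aboveS_i: "aboveS i \<noteq> {}"
begin

lemma aboveS_if_le_i:
  assumes "(x, i) \<in> r"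
  shows "aboveS x \<noteq> {}"
proof -
  obtain k where "(i, k) \<in> r" "k \<noteq> i"
    using aboveS_i by (auto simp: aboveS_def)
  then have "k \<in> aboveS x"
    using assms le_less_trans_r by (auto simp: aboveS_def)
  then show ?thesis by blast
qed

(* wo_succ of a maximal element is unspecified, so iterated successors are only under
   control along a stretch that stays below i. *)
definition stays_le_i :: "'i \<Rightarrow> nat \<Rightarrow> bool" where
  "stays_le_i c n \<longleftrightarrow> (\<forall>k\<le>n. (wo_add r c k, i) \<in> r)"

lemma stays_le_i_mono: "stays_le_i c n \<Longrightarrow> m \<le> n \<Longrightarrow> stays_le_i c m"
  by (auto simp: stays_le_i_def)

lemma stays_le_iD: "stays_le_i c n \<Longrightarrow> k \<le> n \<Longrightarrow> (wo_add r c k, i) \<in> r"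
  by (auto simp: stays_le_i_def)

lemma wo_add_less_Suc:
  assumes "(wo_add r c n, i) \<in> r"
  shows "(wo_add r c n, wo_add r c (Suc n)) \<in> r \<and> wo_add r c n \<noteq> wo_add r c (Suc n)"
  using wo_succ_greater[OF aboveS_if_le_i[OF assms]] by simp

lemma wo_add_mono:
  "(b, c) \<in> r \<Longrightarrow> stays_le_i c n \<Longrightarrow> (wo_add r b n, wo_add r c n) \<in> r \<and> stays_le_i b n"
proof (induction n)
  case 0
  then show ?case using trans_r by (auto simp: stays_le_i_def)
next
  case (Suc n)
  then have IH: "(wo_add r b n, wo_add r c n) \<in> r" "stays_le_i b n"
    using stays_le_i_mono[OF Suc.prems(2)] by auto
  have "aboveS (wo_add r c n) \<noteq> {}"
    using aboveS_if_le_i stays_le_iD[OF Suc.prems(2)] by simp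
  then have le: "(wo_add r b (Suc n), wo_add r c (Suc n)) \<in> r"
    using wo_succ_mono[OF IH(1)] by simp
  moreover have "(wo_add r b (Suc n), i) \<in> r"
    using trans_r[OF le stays_le_iD[OF Suc.prems(2)]] by simp
  ultimately show ?case
    using IH(2) by (auto simp: stays_le_i_def le_Suc_eq)
qed

lemma wo_add_strict_mono:
  "(b, c) \<in> r \<Longrightarrow> b \<noteq> c \<Longrightarrow> stays_le_i c n \<Longrightarrow>
    (wo_add r b n, wo_add r c n) \<in> r \<and> wo_add r b n \<noteq> wo_add r c n"
proof (induction n)
  case (Suc n)
  then have "(wo_add r b n, wo_add r c n) \<in> r" "wo_add r b n \<noteq> wo_add r c n"
    using stays_le_i_mono[OF Suc.prems(3)] by auto
  moreover have "aboveS (wo_add r c n) \<noteq> {}"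
    using aboveS_if_le_i stays_le_iD[OF Suc.prems(3)] by simp
  ultimately show ?case
    using wo_succ_strict_mono by simp
qed simp

lemma wo_add_mono_steps:
  assumes "stays_le_i c n" and "k \<le> n"
  shows "(wo_add r c k, wo_add r c n) \<in> r"
  using assms
proof (induction n)
  case 0
  then show ?case
    using refl_r[OF FieldI1[OF stays_le_iD[OF 0(1), of 0]]] by simp
next
  case (Suc n)
  show ?case
  proof (cases "k = Suc n")
    case True
    then show ?thesis
      using refl_r[OF FieldI1[OF stays_le_iD[OF Suc.prems(1), of "Suc n"]]] by simp
  next
    case False
    have stays: "stays_le_i c n"
      using stays_le_i_mono[OF Suc.prems(1), of n] by simp
    have "k \<le> n"
      using False Suc.prems(2) by simp
    then have "(wo_add r c k, wo_add r c n) \<in> r"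
      using Suc.IH[OF stays] by blast
    moreover have "(wo_add r c n, wo_add r c (Suc n)) \<in> r"
      using wo_add_less_Suc[OF stays_le_iD[OF stays order.refl]] by blast
    ultimately show ?thesis
      using trans_r by blast
  qed
qed

lemma wo_zero_less_succ: "(wo_zero r, wo_succ r (wo_zero r)) \<in> r \<and> wo_zero r \<noteq> wo_succ r (wo_zero r)"
  using wo_succ_greater aboveS_if_le_i wo_zero_least i_in_Field by blast

lemma wo_add_zero_Suc_le:
  assumes "x \<in> Field r" "x \<noteq> wo_zero r" "stays_le_i x n"
  shows "stays_le_i (wo_zero r) (Suc n) \<and> (wo_add r (wo_zero r) (Suc n), wo_add r x n) \<in> r"
proof -
  have "(wo_succ r (wo_zero r), x) \<in> r"
    using wo_succ_least wo_zero_least assms(1,2) by metis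
  then have le: "(wo_add r (wo_succ r (wo_zero r)) n, wo_add r x n) \<in> r"
    and stays: "stays_le_i (wo_succ r (wo_zero r)) n"
    using wo_add_mono assms(3) by blast+
  have "stays_le_i (wo_zero r) (Suc n)"
    unfolding stays_le_i_def
  proof (intro allI impI)
    fix k assume "k \<le> Suc n"
    then show "(wo_add r (wo_zero r) k, i) \<in> r"
      using stays_le_iD[OF stays] wo_zero_least[OF i_in_Field]
      by (cases k) (simp_all add: funpow_Suc_right del: funpow.simps)
  qed
  then show ?thesis
    using le by (simp add: funpow_Suc_right del: funpow.simps)
qed

end

lemma tournament_irrefl: "tournament V E \<Longrightarrow> v \<in> V \<Longrightarrow> \<not> E v v"
  unfolding tournament_def by blast

lemma tournament_flip: "tournament V E \<Longrightarrow> u \<in> V \<Longrightarrow> v \<in> V \<Longrightarrow> u \<noteq> v \<Longrightarrow> E u v \<longleftrightarrow> \<not> E v u"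
  unfolding tournament_def by blast

(* A prime extension of F is determined by the arcs between its new vertex and F; S x records
   whether the new vertex beats x. *)
definition realizes :: "'v set \<Rightarrow> ('v \<Rightarrow> 'v \<Rightarrow> bool) \<Rightarrow> 'v set \<Rightarrow> ('v \<Rightarrow> bool) \<Rightarrow> 'v \<Rightarrow> bool" where
  "realizes V E F S w \<longleftrightarrow> w \<in> V \<and> w \<notin> F \<and> (\<forall>x\<in>F. E w x = S x)"

definition prime_ext_of_type :: "('v \<Rightarrow> 'v \<Rightarrow> bool) \<Rightarrow> ('v \<Rightarrow> bool) \<Rightarrow> 'v option \<Rightarrow> 'v option \<Rightarrow> bool" where
  "prime_ext_of_type E S a b = (case (a, b) of
     (None, None) \<Rightarrow> False | (None, Some y) \<Rightarrow> S y | (Some x, None) \<Rightarrow> \<not> S x | (Some x, Some y) \<Rightarrow> E x y)"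

lemma prime_ext_prime_ext_of_type:
  assumes "tournament V E" and "F \<subseteq> V"
  shows "prime_ext E F (prime_ext_of_type E S)"
  using assms unfolding prime_ext_def tournament_def prime_ext_of_type_def
  by (auto split: option.split)

lemma realization_imp_realizes:
  assumes "realization V E F EB C"
  obtains w where "C = insert w F" and "realizes V E F (\<lambda>x. EB None (Some x)) w"
proof -
  obtain h where bij: "bij_betw h (insert None (Some ` F)) C" and fix_F: "\<forall>a\<in>F. h (Some a) = a"
    and arcs: "\<forall>x\<in>insert None (Some ` F). \<forall>y\<in>insert None (Some ` F). EB x y = E (h x) (h y)"
    and "C \<subseteq> V"
    using assms unfolding realization_def by blast
  have "h ` Some ` F = F"
    using fix_F by (force simp: image_iff)
  then have C: "C = insert (h None) F"
    using bij by (auto simp: bij_betw_def)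
  have "h None \<notin> F"
  proof
    assume "h None \<in> F"
    then have "h (Some (h None)) = h None"
      using fix_F by simp
    then have "Some (h None) = None"
      using inj_onD[OF bij_betw_imp_inj_on[OF bij]] \<open>h None \<in> F\<close> by blast
    then show False by simp
  qed
  then have "realizes V E F (\<lambda>x. EB None (Some x)) (h None)"
    using arcs fix_F C \<open>C \<subseteq> V\<close> by (auto simp: realizes_def)
  then show thesis
    using C that by blast
qed

lemma realizes_imp_realization:
  assumes T: "tournament V E" and ext: "prime_ext E F EB"
    and w: "realizes V E F (\<lambda>x. EB None (Some x)) w" and "F \<subseteq> V"
  shows "realization V E F EB (insert w F)"
proof -
  define h where "h a = (case a of None \<Rightarrow> w | Some x \<Rightarrow> x)" for a
  have wV: "w \<in> V" "w \<notin> F" "\<forall>x\<in>F. E w x = EB None (Some x)"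
    using w by (auto simp: realizes_def)
  have TB: "tournament (insert None (Some ` F)) EB" and EB_F: "\<forall>a\<in>F. \<forall>b\<in>F. EB (Some a) (Some b) = E a b"
    using ext unfolding prime_ext_def by blast+
  have "bij_betw h (insert None (Some ` F)) (insert w F)"
    unfolding bij_betw_def inj_on_def using wV(2) by (auto simp: h_def image_iff split: option.splits)
  moreover have "EB x y = E (h x) (h y)"
    if "x \<in> insert None (Some ` F)" "y \<in> insert None (Some ` F)" for x y
  proof (cases x; cases y)
    fix a assume "x = Some a" "y = None"
    then show ?thesis
      using that tournament_flip[OF TB, of x y] tournament_flip[OF T, of a w] wV \<open>F \<subseteq> V\<close>
      by (auto simp: h_def)
  qed (use that wV EB_F tournament_irrefl[OF TB] tournament_irrefl[OF T] in \<open>auto simp: h_def\<close>)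
  ultimately show ?thesis
    using wV \<open>F \<subseteq> V\<close> unfolding realization_def by (auto simp: h_def)
qed

lemma prime_ext_realization_iff:
  assumes "tournament V E" and "F \<subseteq> V"
  shows "(\<forall>EB. prime_ext E F EB \<longrightarrow> (\<exists>C. realization V E F EB C \<and> P C))
     \<longleftrightarrow> (\<forall>S. \<exists>w. realizes V E F S w \<and> P (insert w F))"
proof (intro iffI allI impI)
  fix S
  assume "\<forall>EB. prime_ext E F EB \<longrightarrow> (\<exists>C. realization V E F EB C \<and> P C)"
  then obtain C where "realization V E F (prime_ext_of_type E S) C" "P C"
    using prime_ext_prime_ext_of_type[OF assms] by blast
  then show "\<exists>w. realizes V E F S w \<and> P (insert w F)"
    by (elim realization_imp_realizes) (auto simp: prime_ext_of_type_def)
next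
  fix EB
  assume "\<forall>S. \<exists>w. realizes V E F S w \<and> P (insert w F)" and "prime_ext E F EB"
  then show "\<exists>C. realization V E F EB C \<and> P C"
    using realizes_imp_realization[OF assms(1)] assms(2) by blast
qed

locale tournament_rank = wo_rel r for r :: "'i rel" +
  fixes V :: "'v set" and E :: "'v \<Rightarrow> 'v \<Rightarrow> bool"
  assumes tournament: "tournament V E"
begin

abbreviation rk :: "'i \<Rightarrow> 'v set \<Rightarrow> bool" where
  "rk j F \<equiv> rk_ge r V E j F"

lemma rk_step_zero: "underS j = {} \<Longrightarrow> rk_step r V E f j = {F. in_age V F}"
  unfolding rk_step_def by simp

lemma rk_step_succ:
  assumes "p \<in> underS j" and "\<forall>q\<in>underS j. (q, p) \<in> r"
  shows "rk_step r V E f j =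
    {F. in_age V F \<and> (\<forall>EB. prime_ext E F EB \<longrightarrow> (\<exists>C. realization V E F EB C \<and> C \<in> f p))}"
  using assms the_greatest_underS[OF assms] unfolding rk_step_def by (auto simp: Let_def)

lemma rk_step_limit:
  assumes "underS j \<noteq> {}" and "\<not> (\<exists>p\<in>underS j. \<forall>q\<in>underS j. (q, p) \<in> r)"
  shows "rk_step r V E f j = {F. in_age V F \<and> (\<forall>k\<in>underS j. F \<in> f k)}"
  unfolding rk_step_def by (simp only: if_not_P[OF assms(1)] if_not_P[OF assms(2)])

lemma rk_step_cong:
  assumes "\<And>k. k \<in> underS j \<Longrightarrow> f k = g k"
  shows "rk_step r V E f j = rk_step r V E g j"
proof (cases j rule: zero_succ_limit_cases)
  case (succ p)
  then show ?thesis using assms by (simp add: rk_step_succ)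
qed (use assms in \<open>simp_all add: rk_step_zero rk_step_limit\<close>)

lemma rk_ge_unfold: "rk j F \<longleftrightarrow> F \<in> rk_step r V E (\<lambda>k. {G. rk k G}) j"
proof -
  have "wfrec (r - Id) (rk_step r V E) j = rk_step r V E (cut (wfrec (r - Id) (rk_step r V E)) (r - Id) j) j"
    by (rule wfrec[OF WF])
  also have "\<dots> = rk_step r V E (\<lambda>k. {G. rk k G}) j"
    by (rule rk_step_cong) (auto simp: cut_def underS_def rk_ge_def)
  finally show ?thesis by (simp add: rk_ge_def)
qed

lemma rk_ge_zero_iff: "underS j = {} \<Longrightarrow> rk j F \<longleftrightarrow> in_age V F"
  by (subst rk_ge_unfold) (simp add: rk_step_zero)

lemma rk_ge_limit_iff:
  assumes "underS j \<noteq> {}" and "\<not> (\<exists>p\<in>underS j. \<forall>q\<in>underS j. (q, p) \<in> r)"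
  shows "rk j F \<longleftrightarrow> in_age V F \<and> (\<forall>k\<in>underS j. rk k F)"
  by (subst rk_ge_unfold) (simp add: rk_step_limit[OF assms])

lemma rk_ge_succ_iff:
  assumes "aboveS p \<noteq> {}" and "p \<in> Field r"
  shows "rk (wo_succ r p) F \<longleftrightarrow> in_age V F \<and> (\<forall>S. \<exists>w. realizes V E F S w \<and> rk p (insert w F))"
proof -
  have "p \<in> underS (wo_succ r p)" "\<forall>q\<in>underS (wo_succ r p). (q, p) \<in> r"
    using underS_wo_succ[OF assms] refl_r[OF assms(2)] by (auto simp: underS_def)
  then have "rk (wo_succ r p) F \<longleftrightarrow>
      in_age V F \<and> (\<forall>EB. prime_ext E F EB \<longrightarrow> (\<exists>C. realization V E F EB C \<and> rk p C))"
    by (subst rk_ge_unfold) (simp add: rk_step_succ)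
  then show ?thesis
    using prime_ext_realization_iff[OF tournament, of F "rk p"] by (auto simp: in_age_def)
qed

lemma rk_ge_in_age: "rk j F \<Longrightarrow> in_age V F"
  by (cases j rule: zero_succ_limit_cases)
    (simp_all add: rk_ge_zero_iff rk_ge_succ_iff rk_ge_limit_iff)

lemma rk_ge_succ_imp:
  "aboveS p \<noteq> {} \<Longrightarrow> p \<in> Field r \<Longrightarrow> rk (wo_succ r p) F \<Longrightarrow> rk p F"
proof (induction p arbitrary: F rule: wf_induct[OF WF])
  case (1 p F)
  have age: "in_age V F"
    using rk_ge_in_age[OF "1.prems"(3)] .
  have ext: "\<forall>S. \<exists>w. realizes V E F S w \<and> rk p (insert w F)"
    using "1.prems" rk_ge_succ_iff by blast
  have below: "rk (wo_succ r q) F" if "q \<in> underS p" "\<And>G. rk p G \<Longrightarrow> rk q G" for q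
  proof -
    have "aboveS q \<noteq> {}" "q \<in> Field r"
      using \<open>q \<in> underS p\<close> by (auto simp: underS_def aboveS_def Field_def)
    then show ?thesis
      using ext that(2) age rk_ge_succ_iff by blast
  qed
  show ?case
  proof (cases p rule: zero_succ_limit_cases)
    case zero
    then show ?thesis using age rk_ge_zero_iff by blast
  next
    case (succ q)
    have "rk q G" if "rk p G" for G
      using "1.IH" succ that by (auto simp: underS_def)
    then show ?thesis using below[OF succ(1)] succ(3) by simp
  next
    case limit
    have "rk q F" if q: "q \<in> underS p" for q
    proof -
      have "rk q G" if "rk p G" for G
        using that q rk_ge_limit_iff[OF limit] by blast
      then have "rk (wo_succ r q) F"
        using below q by blast
      moreover have "aboveS q \<noteq> {}" "q \<in> Field r"
        using q by (auto simp: underS_def aboveS_def Field_def)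
      ultimately show ?thesis
        using "1.IH" q by (auto simp: underS_def)
    qed
    then show ?thesis using age rk_ge_limit_iff[OF limit] by blast
  qed
qed

lemma rk_ge_antimono: "(k, j) \<in> r \<Longrightarrow> rk j F \<Longrightarrow> rk k F"
proof (induction j arbitrary: k rule: wf_induct[OF WF])
  case (1 j k)
  show ?case
  proof (cases "k = j")
    case False
    then have k: "k \<in> underS j"
      using "1.prems"(1) by (auto simp: underS_def)
    show ?thesis
    proof (cases j rule: zero_succ_limit_cases)
      case (succ p)
      then have "rk p F"
        using rk_ge_succ_imp "1.prems"(2) by simp
      then show ?thesis
        using "1.IH" succ(1,2) k by (auto simp: underS_def)
    qed (use k "1.prems"(2) rk_ge_limit_iff in auto)
  qed (use "1.prems" in simp)
qed

end

lemma tournament_image: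
  assumes T: "tournament V E" and inj: "inj_on f V"
    and arcs: "\<And>x y. x \<in> V \<Longrightarrow> y \<in> V \<Longrightarrow> E' (f x) (f y) = E x y"
  shows "tournament (f ` V) E'"
  unfolding tournament_def
proof (intro conjI ballI impI)
  fix u v assume "u \<in> f ` V" "v \<in> f ` V" "u \<noteq> v"
  then obtain x y where "x \<in> V" "y \<in> V" "x \<noteq> y" "u = f x" "v = f y"
    by blast
  then show "E' u v = (\<not> E' v u)"
    using arcs tournament_flip[OF T, of x y] by simp
qed (use arcs tournament_irrefl[OF T] in auto)

lemma realizes_image:
  assumes inj: "inj_on f V" and arcs: "\<And>x y. x \<in> V \<Longrightarrow> y \<in> V \<Longrightarrow> E' (f x) (f y) = E x y"
    and "F \<subseteq> V" and "realizes V E F (\<lambda>x. S (f x)) w"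
  shows "realizes (f ` V) E' (f ` F) S (f w)"
  using assms inj_on_image_mem_iff[OF inj] by (auto simp: realizes_def)

lemma rk_ge_image:
  assumes WO: "Well_order r" and T: "tournament V E" and inj: "inj_on f V"
    and arcs: "\<And>x y. x \<in> V \<Longrightarrow> y \<in> V \<Longrightarrow> E' (f x) (f y) = E x y"
  shows "rk_ge r V E j F \<Longrightarrow> rk_ge r (f ` V) E' j (f ` F)"
proof -
  interpret A: tournament_rank r V E
    using WO T by unfold_locales
  interpret B: tournament_rank r "f ` V" E'
    using WO tournament_image[OF T inj arcs] by unfold_locales
  have age: "in_age (f ` V) (f ` F)" if "in_age V F" for F
    using that by (auto simp: in_age_def)
  show "A.rk j F \<Longrightarrow> B.rk j (f ` F)"
  proof (induction j arbitrary: F rule: wf_induct[OF A.WF])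
    case (1 j F)
    show ?case
    proof (cases j rule: A.zero_succ_limit_cases)
      case zero
      then show ?thesis using "1.prems" age A.rk_ge_zero_iff B.rk_ge_zero_iff by blast
    next
      case (succ p)
      have FV: "F \<subseteq> V" and ext: "\<forall>S. \<exists>w. realizes V E F S w \<and> A.rk p (insert w F)"
        using "1.prems" A.rk_ge_succ_iff[OF succ(4,5)] succ(3) by (auto simp: in_age_def)
      have "\<exists>w'. realizes (f ` V) E' (f ` F) S' w' \<and> B.rk p (insert w' (f ` F))" for S'
      proof -
        obtain w where w: "realizes V E F (\<lambda>x. S' (f x)) w" "A.rk p (insert w F)"
          using ext by blast
        have "B.rk p (f ` insert w F)"
          using "1.IH" succ(1) w(2) unfolding underS_def by blast
        then show ?thesis
          using realizes_image[OF inj arcs FV w(1)] by auto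
      qed
      then show ?thesis
        using B.rk_ge_succ_iff[OF succ(4,5)] succ(3) age A.rk_ge_in_age[OF "1.prems"] by blast
    next
      case limit
      then show ?thesis
        using "1.IH" "1.prems" age A.rk_ge_limit_iff B.rk_ge_limit_iff by (auto simp: underS_def)
    qed
  qed
qed

lemma rank_eq_image:
  assumes WO: "Well_order r" and T: "tournament V E" and inj: "inj_on f V"
    and arcs: "\<And>x y. x \<in> V \<Longrightarrow> y \<in> V \<Longrightarrow> E' (f x) (f y) = E x y"
    and "rank_eq r V E i"
  shows "rank_eq r (f ` V) E' i"
proof -
  let ?g = "inv_into V f"
  have "rk_ge r (?g ` f ` V) E (wo_succ r i) (?g ` {})" if "rk_ge r (f ` V) E' (wo_succ r i) {}"
  proof (rule rk_ge_image[OF WO tournament_image[OF T inj arcs] inj_on_inv_into])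
    show "E (?g x') (?g y') = E' x' y'" if "x' \<in> f ` V" "y' \<in> f ` V" for x' y'
      using that arcs inv_into_f_f[OF inj] by auto
  qed (use that in simp_all)
  then show ?thesis
    using assms rk_ge_image[OF WO T inj arcs, of i "{}"] inv_into_image_cancel[OF inj, of V]
    by (auto simp: rank_eq_def)
qed

(* The last entry (q, l, c) of a node carries its label l and, in c, its arcs to its proper
   prefixes; q only serves to place a sibling on either side of a node in the lexicographic
   order. *)
type_synonym 'i entry = "int \<times> 'i \<times> bool list"
type_synonym 'i node = "'i entry list"

definition entry_label :: "'i entry \<Rightarrow> 'i" where
  "entry_label e = fst (snd e)"

definition entry_code :: "'i entry \<Rightarrow> bool list" where
  "entry_code e = snd (snd e)"

definition tip_label :: "'i node \<Rightarrow> 'i" where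
  "tip_label t = entry_label (last t)"

definition tree_node :: "'i rel \<Rightarrow> 'i \<Rightarrow> 'i node \<Rightarrow> bool" where
  "tree_node r i t \<longleftrightarrow> t \<noteq> [] \<and>
     (\<forall>j<length t. (entry_label (t ! j), i) \<in> r \<and> entry_label (t ! j) \<noteq> i \<and>
        underS r (entry_label (t ! j)) \<noteq> {} \<and> length (entry_code (t ! j)) = j) \<and>
     (\<forall>j. Suc j < length t \<longrightarrow>
        (entry_label (t ! Suc j), entry_label (t ! j)) \<in> r \<and> entry_label (t ! Suc j) \<noteq> entry_label (t ! j))"

definition tree_arc :: "'i::linorder node \<Rightarrow> 'i node \<Rightarrow> bool" where
  "tree_arc x y = (if strict_prefix y x then entry_code (last x) ! (length y - 1)
     else if strict_prefix x y then \<not> entry_code (last y) ! (length x - 1)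
     else x < y)"

definition prefix_set :: "'a list \<Rightarrow> 'a list set" where
  "prefix_set t = {p. p \<noteq> [] \<and> prefix p t}"

definition common_prefixes :: "'a list \<Rightarrow> 'a list \<Rightarrow> 'a list set" where
  "common_prefixes u w = {x. x \<noteq> [] \<and> strict_prefix x u \<and> strict_prefix x w}"

lemma tree_node_prefix:
  assumes "tree_node r i t" and "p \<noteq> []" and "prefix p t"
  shows "tree_node r i p"
proof -
  have len: "length p \<le> length t"
    using assms(3) prefix_length_le by blast
  have "p ! j = t ! j" if "j < length p" for j
    using assms(3) that by (metis prefix_def nth_append)
  then show ?thesis
    using assms len unfolding tree_node_def by (auto simp del: lessI)
qed

lemma prefix_set_Nil [simp]: "prefix_set [] = {}"
  by (simp add: prefix_set_def)

lemma prefix_set_eq: "prefix_set t = set (prefixes t) - {[]}"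
  by (auto simp: prefix_set_def)

lemma finite_prefix_set: "finite (prefix_set t)"
  by (simp add: prefix_set_eq)

lemma card_prefix_set: "card (prefix_set t) = length t"
  by (simp add: prefix_set_eq distinct_card[OF distinct_prefixes])

lemma prefix_set_snoc: "prefix_set (t @ [e]) = insert (t @ [e]) (prefix_set t)"
  by (auto simp: prefix_set_def prefix_append prefix_Cons intro: prefix_prefix)

lemma snoc_notin_prefix_set: "t @ [e] \<notin> prefix_set t"
  by (auto simp: prefix_set_def dest: prefix_length_le)

lemma finite_common_prefixes: "finite (common_prefixes u w)"
  by (rule finite_subset[OF _ finite_prefix_set[of u]]) (auto simp: common_prefixes_def prefix_set_def)

lemma less_append_Cons: "(x :: 'a::linorder list) < x @ b # z"
  by (induction x) auto

lemma strict_prefix_imp_less: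
  assumes "strict_prefix x y"
  shows "x < (y :: 'a::linorder list)"
proof -
  obtain zs where "y = x @ zs" "zs \<noteq> []"
    using assms by (auto simp: strict_prefix_def prefix_def)
  then obtain b z where "y = x @ b # z"
    by (auto simp: neq_Nil_conv)
  then show ?thesis
    using less_append_Cons by simp
qed

lemma branch_less_iff: "a \<noteq> b \<Longrightarrow> ((p @ a # u :: 'a::linorder list) < p @ b # w) \<longleftrightarrow> a < b"
  by (induction p) auto

lemma tree_arc_parallel: "x \<parallel> y \<Longrightarrow> tree_arc x y \<longleftrightarrow> x < y"
  by (auto simp: tree_arc_def parallel_def strict_prefix_def)

lemma tournament_tree_arc: "tournament V tree_arc"
  unfolding tournament_def
proof (intro conjI ballI impI)
  fix u v :: "'i::linorder node" assume "u \<noteq> v"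
  then consider "strict_prefix u v" | "strict_prefix v u" | "u \<parallel> v"
    using prefix_cases[of u v] by (auto simp: strict_prefix_def)
  then show "tree_arc u v = (\<not> tree_arc v u)"
  proof cases
    case 3
    then have "v \<parallel> u"
      by (auto simp: parallel_def)
    then show ?thesis
      using tree_arc_parallel[OF 3] tree_arc_parallel[of v u] \<open>u \<noteq> v\<close> by auto
  qed (auto simp: tree_arc_def strict_prefix_def)
qed (simp add: tree_arc_def)

lemma less_if_branch_prefixes:
  assumes "a < b" and "prefix (p @ [a]) z" and "prefix (p @ [b]) z'"
  shows "z < (z' :: 'a::linorder list)"
  using assms branch_less_iff[of a b p] by (auto simp: prefix_def)

lemma parallel_less_branches:
  assumes "u \<parallel> w" and "u < (w :: 'a::linorder list)"
  obtains a b p where "a < b" "prefix (p @ [a]) u" "prefix (p @ [b]) w"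
    "\<And>x. prefix x w \<Longrightarrow> prefix x p \<or> prefix (p @ [b]) x"
proof -
  obtain p a u' b w' where "a \<noteq> b" and u: "u = p @ a # u'" and w: "w = p @ b # w'"
    using parallel_decomp[OF assms(1)] by blast
  then have "a < b"
    using \<open>u < w\<close> branch_less_iff[OF \<open>a \<noteq> b\<close>, of p u' w'] by simp
  moreover have "prefix (p @ [a]) u" "prefix (p @ [b]) w"
    using u w by simp_all
  moreover have "prefix x p \<or> prefix (p @ [b]) x" if "prefix x w" for x
    using that unfolding w by (auto simp: prefix_append prefix_Cons)
  ultimately show thesis
    by (rule that)
qed

lemma tree_arc_cycle_not_parallel:
  fixes u w x :: "'i::linorder node"
  assumes "u \<parallel> w" "u < w" and xu: "tree_arc x u" and wx: "tree_arc w x" and "x \<parallel> u"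
  shows False
proof -
  obtain a b p where "a < b" and pa: "prefix (p @ [a]) u" and pb: "prefix (p @ [b]) w"
    and below_w: "\<And>x. prefix x w \<Longrightarrow> prefix x p \<or> prefix (p @ [b]) x"
    using parallel_less_branches[OF assms(1,2)] by metis
  have "x < u"
    using tree_arc_parallel[OF \<open>x \<parallel> u\<close>] xu by blast
  consider "x \<parallel> w" | "prefix w x" | "prefix x p" | "prefix (p @ [b]) x"
    using prefix_cases[of x w] below_w by blast
  then show False
  proof cases
    case 1
    then have "w < x"
      using tree_arc_parallel[of w x] wx by (auto simp: parallel_def)
    then show False
      using \<open>x < u\<close> \<open>u < w\<close> by (meson order.asym order.strict_trans)
  next
    case 3
    then have "prefix x u"
      using pa prefix_order.trans[OF 3] by (auto simp: prefix_def)
    then show False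
      using \<open>x \<parallel> u\<close> by (auto simp: parallel_def)
  next
    case 2
    have "u < x"
      using less_if_branch_prefixes[OF \<open>a < b\<close> pa prefix_order.trans[OF pb 2]] .
    then show False
      using \<open>x < u\<close> by (meson order.asym)
  next
    case 4
    have "u < x"
      using less_if_branch_prefixes[OF \<open>a < b\<close> pa 4] .
    then show False
      using \<open>x < u\<close> by (meson order.asym)
  qed
qed

lemma tree_arc_cycle_not_extension:
  fixes u w x :: "'i::linorder node"
  assumes "u \<parallel> w" "u < w" and wx: "tree_arc w x" and "prefix u x"
  shows False
proof -
  obtain p a b where "a < b" and pa: "prefix (p @ [a]) u" and pb: "prefix (p @ [b]) w"
    using parallel_less_branches[OF assms(1,2)] by metis
  have "x < w"
    using less_if_branch_prefixes[OF \<open>a < b\<close> prefix_order.trans[OF pa \<open>prefix u x\<close>] pb] .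
  moreover have "\<not> prefix x w"
    using prefix_order.trans[OF \<open>prefix u x\<close>] \<open>u \<parallel> w\<close> by (auto simp: parallel_def)
  moreover have "\<not> prefix w x"
    using prefix_same_cases[OF \<open>prefix u x\<close>] \<open>u \<parallel> w\<close> by (auto simp: parallel_def)
  ultimately show False
    using tree_arc_parallel[of w x] wx by (auto simp: parallel_def)
qed

(* Since u < w means u beats w, the hypotheses describe a 3-cycle u, w, x. *)
lemma tree_arc_cycle_common_prefix:
  fixes u w x :: "'i::linorder node"
  assumes "u \<parallel> w" "u < w" and "x \<noteq> u" "x \<noteq> w" and "tree_arc x u" "tree_arc w x"
  shows "strict_prefix x u \<and> strict_prefix x w"
proof -
  have xu: "strict_prefix x u"
    using prefix_cases[of x u] tree_arc_cycle_not_parallel[OF assms(1,2,5,6)]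
      tree_arc_cycle_not_extension[OF assms(1,2,6)] \<open>x \<noteq> u\<close>
    by (metis strict_prefix_def)
  consider "x \<parallel> w" | "prefix w x" | "strict_prefix x w"
    using prefix_cases[of x w] \<open>x \<noteq> w\<close> by (auto simp: strict_prefix_def)
  then show ?thesis
  proof cases
    case 1
    then have "w < x"
      using tree_arc_parallel[of w x] \<open>tree_arc w x\<close> by (auto simp: parallel_def)
    then show ?thesis
      using strict_prefix_imp_less[OF xu] \<open>u < w\<close> by (meson order.asym order.strict_trans)
  next
    case 2
    then have "prefix w u"
      using prefix_order.trans[OF 2] xu by (simp add: strict_prefix_def)
    then show ?thesis
      using \<open>u \<parallel> w\<close> by (auto simp: parallel_def)
  qed (use xu in blast)
qed

definition code_of :: "('i node \<Rightarrow> bool) \<Rightarrow> 'i node \<Rightarrow> bool list" where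
  "code_of S t = map (\<lambda>k. S (take (Suc k) t)) [0..<length t]"

lemma length_code_of [simp]: "length (code_of S t) = length t"
  by (simp add: code_of_def)

lemma tree_arc_child:
  assumes "y \<in> prefix_set t"
  shows "tree_arc (t @ [(q, l, code_of S t)]) y = S y"
proof -
  have "y \<noteq> []" "prefix y t"
    using assms by (auto simp: prefix_set_def)
  then have "strict_prefix y (t @ [(q, l, code_of S t)])" "y = take (length y) t"
    "length y - 1 < length t" "Suc (length y - 1) = length y"
    by (auto simp: strict_prefix_def prefix_def neq_Nil_conv)
  then show ?thesis
    by (simp add: tree_arc_def entry_code_def code_of_def)
qed

lemma tree_arc_sibling:
  assumes "y \<in> prefix_set (s @ [(q, l, c)])"
  shows "tree_arc (s @ [(if S (s @ [(q, l, c)]) then q - 1 else q + 1, l, code_of S s)]) y = S y"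
proof -
  let ?t = "s @ [(q, l, c)]"
  let ?e = "(if S ?t then q - 1 else q + 1, l, code_of S s)"
  have "y = ?t \<or> y \<in> prefix_set s"
    using assms by (simp add: prefix_set_snoc)
  then show ?thesis
  proof
    assume "y = ?t"
    have "?e \<noteq> (q, l, c)"
      by simp
    then have "s @ [?e] \<parallel> ?t"
      by (simp add: parallel_def)
    then have "tree_arc (s @ [?e]) ?t \<longleftrightarrow> s @ [?e] < ?t"
      by (rule tree_arc_parallel)
    also have "\<dots> \<longleftrightarrow> ?e < (q, l, c)"
      by (fact branch_less_iff[OF \<open>?e \<noteq> (q, l, c)\<close>, of s "[]" "[]"])
    also have "\<dots> \<longleftrightarrow> S ?t"
      by (simp add: less_prod_def)
    finally show ?thesis
      using \<open>y = ?t\<close> by simp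
  qed (rule tree_arc_child)
qed

lemma sibling_notin_prefix_set: "e' \<noteq> e \<Longrightarrow> s @ [e'] \<notin> prefix_set (s @ [e])"
  by (simp add: prefix_set_def)

locale tree_tournament = wo_bounded r i for r :: "'i::linorder rel" and i :: 'i
begin

abbreviation nodes :: "'i node set" where
  "nodes \<equiv> {t. tree_node r i t}"

sublocale tree: tournament_rank r nodes tree_arc
  by unfold_locales (rule tournament_tree_arc)

lemma tree_node_entry:
  assumes "tree_node r i t" and "j < length t"
  shows "(entry_label (t ! j), i) \<in> r" "entry_label (t ! j) \<noteq> i"
    "underS (entry_label (t ! j)) \<noteq> {}" "length (entry_code (t ! j)) = j"
  using assms unfolding tree_node_def by auto

lemma tree_node_label_decreasing:
  assumes "tree_node r i t" and "Suc j < length t"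
  shows "(entry_label (t ! Suc j), entry_label (t ! j)) \<in> r" "entry_label (t ! Suc j) \<noteq> entry_label (t ! j)"
  using assms unfolding tree_node_def by auto

lemma tree_node_nonempty: "tree_node r i t \<Longrightarrow> t \<noteq> []"
  by (simp add: tree_node_def)

lemma tip_label_eq_nth: "t \<noteq> [] \<Longrightarrow> tip_label t = entry_label (t ! (length t - 1))"
  by (simp add: tip_label_def last_conv_nth)

lemma tip_label_bounds:
  assumes "tree_node r i t"
  shows "(tip_label t, i) \<in> r" "tip_label t \<noteq> i" "underS (tip_label t) \<noteq> {}"
proof -
  have "t \<noteq> []"
    using tree_node_nonempty[OF assms] .
  then show "(tip_label t, i) \<in> r" "tip_label t \<noteq> i" "underS (tip_label t) \<noteq> {}"
    using tree_node_entry[OF assms, of "length t - 1"] tip_label_eq_nth[of t] by simp_all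
qed

lemma tree_node_snoc:
  assumes t: "tree_node r i t" and l: "(l, tip_label t) \<in> r" "l \<noteq> tip_label t" "underS l \<noteq> {}"
    and c: "length c = length t"
  shows "tree_node r i (t @ [(q, l, c)])"
proof -
  have tip: "entry_label (t ! j) = tip_label t" if "Suc j = length t" for j
  proof -
    have "j = length t - 1"
      using that by simp
    then show ?thesis
      using tip_label_eq_nth[OF tree_node_nonempty[OF t]] by simp
  qed
  have "(l, i) \<in> r" "l \<noteq> i"
    using le_less_trans_r[OF l(1) tip_label_bounds(1,2)[OF t]] by auto
  then show ?thesis
    using t l c tip unfolding tree_node_def
    by (auto simp: nth_append entry_label_def entry_code_def less_Suc_eq)
qed

lemma tree_node_single: "(l, i) \<in> r \<Longrightarrow> l \<noteq> i \<Longrightarrow> underS l \<noteq> {} \<Longrightarrow> tree_node r i [(q, l, [])]"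
  unfolding tree_node_def by (auto simp: entry_label_def entry_code_def less_Suc_eq)

lemma tree_node_sibling:
  assumes "tree_node r i (s @ [(q, l, c)])" and "length c' = length s"
  shows "tree_node r i (s @ [(q', l, c')])"
proof -
  have "length c = length s"
    using tree_node_entry(4)[OF assms(1), of "length s"] by (simp add: entry_code_def)
  then show ?thesis
    using assms unfolding tree_node_def
    by (auto simp: nth_append entry_label_def entry_code_def less_Suc_eq)
qed

lemma prefix_set_subset_nodes: "tree_node r i t \<Longrightarrow> prefix_set t \<subseteq> nodes"
  using tree_node_prefix by (auto simp: prefix_set_def)

lemma in_age_prefix_set: "tree_node r i t \<Longrightarrow> in_age nodes (prefix_set t)"
  using finite_prefix_set prefix_set_subset_nodes by (auto simp: in_age_def)

(* Labels strictly decrease along a node, so counting back m entries from the tip climbs at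
   least m successor steps. *)
lemma wo_add_tip_label_le:
  assumes t: "tree_node r i t" and "m < length t"
  shows "(wo_add r (tip_label t) m, entry_label (t ! (length t - 1 - m))) \<in> r"
  using \<open>m < length t\<close>
proof (induction m)
  case 0
  have "tip_label t = entry_label (t ! (length t - 1))"
    using tip_label_eq_nth[OF tree_node_nonempty[OF t]] .
  then show ?case
    using refl_r[OF FieldI1[OF tip_label_bounds(1)[OF t]]] by simp
next
  case (Suc m)
  define k where "k = length t - 1 - m"
  have k: "1 \<le> k" "k < length t" "Suc (k - 1) = k" "length t - 1 - Suc m = k - 1"
    using Suc.prems by (auto simp: k_def)
  have "(wo_add r (tip_label t) m, entry_label (t ! k)) \<in> r"
    using Suc by (simp add: k_def)
  moreover have "(entry_label (t ! k), entry_label (t ! (k - 1))) \<in> r" "entry_label (t ! k) \<noteq> entry_label (t ! (k - 1))"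
    using tree_node_label_decreasing[OF t, of "k - 1"] k by auto
  ultimately have "(wo_add r (tip_label t) m, entry_label (t ! (k - 1))) \<in> r \<and>
      wo_add r (tip_label t) m \<noteq> entry_label (t ! (k - 1))"
    by (rule le_less_trans_r)
  then have "(wo_succ r (wo_add r (tip_label t) m), entry_label (t ! (k - 1))) \<in> r"
    using wo_succ_least by blast
  then show ?case
    using k(4) by simp
qed

lemma wo_add_tip_label_less_i:
  assumes "tree_node r i t" and "m < length t"
  shows "(wo_add r (tip_label t) m, i) \<in> r \<and> wo_add r (tip_label t) m \<noteq> i"
  using le_less_trans_r[OF wo_add_tip_label_le[OF assms]] tree_node_entry[OF assms(1), of "length t - 1 - m"]
    assms(2) by simp

lemma stays_le_i_tip_label: "tree_node r i t \<Longrightarrow> n < length t \<Longrightarrow> stays_le_i (tip_label t) n"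
  unfolding stays_le_i_def using wo_add_tip_label_less_i by auto

lemma child_realizes:
  assumes "tree_node r i t" and "(l, tip_label t) \<in> r" "l \<noteq> tip_label t" "underS l \<noteq> {}"
  shows "realizes nodes tree_arc (prefix_set t) S (t @ [(0, l, code_of S t)])"
proof -
  have "tree_node r i (t @ [(0, l, code_of S t)])"
    by (rule tree_node_snoc[OF assms length_code_of])
  moreover have "t @ [(0, l, code_of S t)] \<notin> prefix_set t"
    by (rule snoc_notin_prefix_set)
  moreover have "\<forall>y\<in>prefix_set t. tree_arc (t @ [(0, l, code_of S t)]) y = S y"
    by (intro ballI tree_arc_child)
  ultimately show ?thesis
    by (simp add: realizes_def)
qed

lemma sibling_realizes:
  assumes "tree_node r i t"
  obtains w where "realizes nodes tree_arc (prefix_set t) S w"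
proof -
  obtain s e where "t = s @ [e]"
    using tree_node_nonempty[OF assms] rev_exhaust by blast
  moreover obtain q l c where "e = (q, l, c)"
    by (cases e) blast
  ultimately have t: "t = s @ [(q, l, c)]"
    by simp
  let ?w = "s @ [(if S t then q - 1 else q + 1, l, code_of S s)]"
  have "tree_node r i ?w"
    by (rule tree_node_sibling[OF _ length_code_of]) (use assms t in simp)
  moreover have "?w \<notin> prefix_set t"
    unfolding t by (rule sibling_notin_prefix_set) simp
  moreover have "\<forall>y\<in>prefix_set t. tree_arc ?w y = S y"
    unfolding t by (intro ballI tree_arc_sibling)
  ultimately show thesis
    using that by (simp add: realizes_def)
qed

lemma rk_ge_insert_if_zero:
  "underS p = {} \<Longrightarrow> realizes nodes tree_arc F S w \<Longrightarrow> in_age nodes F \<Longrightarrow> tree.rk p (insert w F)"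
  using tree.rk_ge_zero_iff by (auto simp: realizes_def in_age_def)

lemma rk_ge_prefix_set: "tree_node r i t \<Longrightarrow> (j, tip_label t) \<in> r \<Longrightarrow> tree.rk j (prefix_set t)"
proof (induction j arbitrary: t rule: wf_induct[OF WF])
  case (1 j t)
  note t = "1.prems"(1) and j = "1.prems"(2)
  have age: "in_age nodes (prefix_set t)"
    using in_age_prefix_set[OF t] .
  show ?case
  proof (cases j rule: zero_succ_limit_cases)
    case zero
    then show ?thesis using age tree.rk_ge_zero_iff by blast
  next
    case (succ p)
    have p: "(p, tip_label t) \<in> r" "p \<noteq> tip_label t"
      using less_le_trans_r[OF _ _ j] succ(1) by (auto simp: underS_def)
    have "\<exists>w. realizes nodes tree_arc (prefix_set t) S w \<and> tree.rk p (insert w (prefix_set t))" for S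
    proof (cases "underS p = {}")
      case True
      then show ?thesis
        using sibling_realizes[OF t] rk_ge_insert_if_zero age by metis
    next
      case False
      let ?c = "t @ [(0, p, code_of S t)]"
      have "tree.rk p (prefix_set ?c)"
        using "1.IH" succ(1,5) refl_r tree_node_snoc[OF t p False length_code_of]
        by (auto simp: underS_def tip_label_def entry_label_def)
      moreover have "prefix_set ?c = insert ?c (prefix_set t)"
        by (rule prefix_set_snoc)
      ultimately show ?thesis
        using child_realizes[OF t p False, of S] by auto
    qed
    then show ?thesis
      using tree.rk_ge_succ_iff[OF succ(4,5)] succ(3) age by blast
  next
    case limit
    then show ?thesis
      using "1.IH" t j age trans_r tree.rk_ge_limit_iff by (auto simp: underS_def)
  qed
qed

lemma rk_ge_empty: "nodes \<noteq> {} \<Longrightarrow> (j, i) \<in> r \<Longrightarrow> tree.rk j {}"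
proof (induction j rule: wf_induct[OF WF])
  case (1 j)
  have age: "in_age nodes {}"
    by (simp add: in_age_def)
  show ?case
  proof (cases j rule: zero_succ_limit_cases)
    case zero
    then show ?thesis using age tree.rk_ge_zero_iff by blast
  next
    case (succ p)
    have p: "(p, i) \<in> r" "p \<noteq> i"
      using less_le_trans_r[OF _ _ "1.prems"(2)] succ(1) by (auto simp: underS_def)
    have "\<exists>w. realizes nodes tree_arc {} S w \<and> tree.rk p (insert w {})" for S
    proof (cases "underS p = {}")
      case True
      then show ?thesis
        using "1.prems"(1) rk_ge_insert_if_zero age by (auto simp: realizes_def)
    next
      case False
      let ?w = "[(0, p, [])] :: 'i node"
      have "tree_node r i ?w"
        using tree_node_single p False by blast
      moreover have "prefix_set ?w = {?w}"
        using prefix_set_snoc[of "[]"] by simp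
      moreover have "tree.rk p (prefix_set ?w)"
        using rk_ge_prefix_set[OF \<open>tree_node r i ?w\<close>] refl_r[OF succ(5)]
        by (simp add: tip_label_def entry_label_def)
      ultimately have "realizes nodes tree_arc {} S ?w \<and> tree.rk p (insert ?w {})"
        by (simp add: realizes_def)
      then show ?thesis ..
    qed
    then show ?thesis
      using tree.rk_ge_succ_iff[OF succ(4,5)] succ(3) age by blast
  next
    case limit
    then show ?thesis
      using "1.IH" "1.prems" age trans_r tree.rk_ge_limit_iff by (auto simp: underS_def)
  qed
qed

lemma common_prefix_realizer:
  assumes G: "G \<subseteq> nodes" "u \<in> G" "w \<in> G" and "u \<parallel> w" "u < w"
    and "(j, i) \<in> r" and "tree.rk (wo_succ r j) G"
  obtains x where "x \<in> common_prefixes u w - G" and "tree.rk j (insert x G)"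
proof -
  have "aboveS j \<noteq> {}" "j \<in> Field r"
    using aboveS_if_le_i[OF \<open>(j, i) \<in> r\<close>] FieldI1[OF \<open>(j, i) \<in> r\<close>] .
  then obtain x where x: "realizes nodes tree_arc G (\<lambda>y. y = u) x" "tree.rk j (insert x G)"
    using tree.rk_ge_succ_iff assms(7) by blast
  then have "tree_node r i x" "x \<notin> G" "tree_arc x u" "\<not> tree_arc x w"
    using G \<open>u \<parallel> w\<close> by (auto simp: realizes_def parallel_def)
  moreover have "x \<noteq> u" "x \<noteq> w"
    using \<open>x \<notin> G\<close> G by auto
  moreover have "tree_arc w x"
    using tournament_flip[OF tournament_tree_arc[of nodes], of x w] G calculation by auto
  ultimately have "x \<in> common_prefixes u w - G"
    using tree_arc_cycle_common_prefix[OF \<open>u \<parallel> w\<close> \<open>u < w\<close>] tree_node_nonempty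
    by (auto simp: common_prefixes_def)
  then show thesis
    using that x(2) by blast
qed

(* Each realization of "beat u and nothing else in G" uses up a common prefix of u and w. *)
lemma not_rk_ge_incomparable:
  assumes "finite G" "G \<subseteq> nodes" "u \<in> G" "w \<in> G" "u \<parallel> w" "u < w"
    and "card (common_prefixes u w - G) = m" and "stays_le_i (wo_zero r) m"
  shows "\<not> tree.rk (wo_add r (wo_zero r) (Suc m)) G"
  using assms
proof (induction m arbitrary: G)
  case 0
  show ?case
  proof
    assume "tree.rk (wo_add r (wo_zero r) (Suc 0)) G"
    then obtain x where "x \<in> common_prefixes u w - G"
      using common_prefix_realizer[OF "0.prems"(2-6)] stays_le_iD[OF "0.prems"(8), of 0] by auto
    moreover have "common_prefixes u w - G = {}"
      using "0.prems"(7) card_0_eq[OF finite_Diff[OF finite_common_prefixes]] by blast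
    ultimately show False
      by blast
  qed
next
  case (Suc m)
  show ?case
  proof
    assume "tree.rk (wo_add r (wo_zero r) (Suc (Suc m))) G"
    then obtain x where x: "x \<in> common_prefixes u w - G"
      and rk: "tree.rk (wo_add r (wo_zero r) (Suc m)) (insert x G)"
      using common_prefix_realizer[OF Suc.prems(2-6)] stays_le_iD[OF Suc.prems(8), of "Suc m"] by auto
    have "common_prefixes u w - insert x G = (common_prefixes u w - G) - {x}"
      by blast
    then have "card (common_prefixes u w - insert x G) = m"
      using Suc.prems(7) x finite_common_prefixes by (simp add: card_Diff_singleton)
    moreover have "x \<in> nodes"
      using x tree_node_prefix[of r i u x] Suc.prems(2,3) by (auto simp: common_prefixes_def strict_prefix_def)
    ultimately have "\<not> tree.rk (wo_add r (wo_zero r) (Suc m)) (insert x G)"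
      using Suc.IH[of "insert x G"] Suc.prems stays_le_i_mono[OF Suc.prems(8)] by simp
    then show False
      using rk by blast
  qed
qed

lemma wo_add_extension_less:
  assumes x: "tree_node r i x" and tx: "strict_prefix t x" "t \<noteq> []" and n: "stays_le_i (tip_label t) n"
  shows "(wo_add r (tip_label x) (length x - length t - 1 + n), wo_add r (tip_label t) n) \<in> r \<and>
    wo_add r (tip_label x) (length x - length t - 1 + n) \<noteq> wo_add r (tip_label t) n"
proof -
  define k where "k = length x - length t - 1"
  have len: "length t < length x" "0 < length t"
    using prefix_length_less[OF tx(1)] tx(2) by simp_all
  have idx: "Suc k < length x" "length x - 1 - Suc k = length t - 1"
    using len unfolding k_def by arith+
  have "(wo_add r (tip_label x) (Suc k), entry_label (x ! (length t - 1))) \<in> r"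
    using wo_add_tip_label_le[OF x idx(1)] unfolding idx(2) .
  moreover have "x ! (length t - 1) = last t"
    using tx(1) len by (auto simp: strict_prefix_def prefix_def nth_append last_conv_nth)
  moreover have "(wo_add r (tip_label x) k, wo_add r (tip_label x) (Suc k)) \<in> r \<and>
      wo_add r (tip_label x) k \<noteq> wo_add r (tip_label x) (Suc k)"
    using wo_add_less_Suc wo_add_tip_label_less_i[OF x, of k] len by (simp add: k_def)
  ultimately have "(wo_add r (tip_label x) k, tip_label t) \<in> r \<and> wo_add r (tip_label x) k \<noteq> tip_label t"
    using less_le_trans_r by (auto simp: tip_label_def)
  then have "(wo_add r (wo_add r (tip_label x) k) n, wo_add r (tip_label t) n) \<in> r \<and>
      wo_add r (wo_add r (tip_label x) k) n \<noteq> wo_add r (tip_label t) n"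
    using wo_add_strict_mono n by blast
  moreover have "wo_add r (wo_add r (tip_label x) k) n = wo_add r (tip_label x) (k + n)"
    by (metis add.commute comp_apply funpow_add)
  ultimately show ?thesis
    by (simp add: k_def)
qed

definition chain_bound :: "'i node \<Rightarrow> 'i node set \<Rightarrow> 'i" where
  "chain_bound t F = wo_add r (tip_label t) (length t - card F)"

lemma chain_bound_facts:
  assumes t: "tree_node r i t" "t \<in> F" "F \<subseteq> prefix_set t"
  shows "finite F" "card F \<le> length t" "stays_le_i (tip_label t) (length t - card F)"
    "(chain_bound t F, i) \<in> r"
proof -
  show fin: "finite F"
    using finite_subset[OF t(3) finite_prefix_set] .
  show "card F \<le> length t"
    using card_mono[OF finite_prefix_set t(3)] card_prefix_set[of t] by simp
  moreover have "card F \<noteq> 0"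
    using fin t(2) by auto
  ultimately have "length t - card F < length t"
    by simp
  then show "stays_le_i (tip_label t) (length t - card F)" "(chain_bound t F, i) \<in> r"
    using stays_le_i_tip_label[OF t(1)] wo_add_tip_label_less_i[OF t(1)] by (simp_all add: chain_bound_def)
qed

lemma chain_bound_insert_prefix:
  assumes t: "tree_node r i t" "t \<in> F" "F \<subseteq> prefix_set t" and x: "x \<in> prefix_set t" "x \<notin> F"
  shows "chain_bound t F = wo_succ r (chain_bound t (insert x F))"
    and "(chain_bound t (insert x F), chain_bound t F) \<in> r - Id"
proof -
  have "card (insert x F) \<le> length t" "card (insert x F) = Suc (card F)"
    using chain_bound_facts(1,2)[of t "insert x F"] t x by auto
  then have n: "length t - card F = Suc (length t - card (insert x F))"
    by simp
  then show eq: "chain_bound t F = wo_succ r (chain_bound t (insert x F))"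
    by (simp add: chain_bound_def)
  have "(chain_bound t (insert x F), i) \<in> r"
    using stays_le_iD[OF chain_bound_facts(3)[OF t]] n by (simp add: chain_bound_def)
  then show "(chain_bound t (insert x F), chain_bound t F) \<in> r - Id"
    unfolding eq using wo_succ_greater[OF aboveS_if_le_i] by blast
qed

lemma chain_bound_insert_extension:
  assumes t: "tree_node r i t" "t \<in> F" "F \<subseteq> prefix_set t"
    and x: "tree_node r i x" "strict_prefix t x" "x \<notin> F"
  shows "(chain_bound x (insert x F), chain_bound t F) \<in> r - Id"
proof -
  have "length x - card (insert x F) = length x - length t - 1 + (length t - card F)"
    using chain_bound_facts(1,2)[OF t] prefix_length_less[OF x(2)] x(3) by simp
  then show ?thesis
    using wo_add_extension_less[OF x(1,2) tree_node_nonempty[OF t(1)] chain_bound_facts(3)[OF t]]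
    by (simp add: chain_bound_def)
qed

lemma not_rk_ge_chain_incomparable:
  assumes t: "tree_node r i t" "t \<in> F" "F \<subseteq> prefix_set t"
    and x: "tree_node r i x" "x \<notin> F" "x \<parallel> t"
  shows "\<not> tree.rk (chain_bound t F) (insert x F)"
proof
  let ?n = "length t - card F"
  let ?m = "card (common_prefixes (min t x) (max t x) - insert x F)"
  assume rk: "tree.rk (chain_bound t F) (insert x F)"
  have "common_prefixes (min t x) (max t x) - insert x F \<subseteq> prefix_set t - F"
    by (auto simp: min_def max_def common_prefixes_def prefix_set_def strict_prefix_def)
  then have "?m \<le> card (prefix_set t - F)"
    by (simp add: card_mono finite_prefix_set)
  also have "\<dots> = ?n"
    using card_Diff_subset[OF chain_bound_facts(1)[OF t] t(3)] by (metis card_prefix_set)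
  finally have "?m \<le> ?n" .
  have "tip_label t \<in> Field r"
    using FieldI1[OF tip_label_bounds(1)[OF t(1)]] .
  then have "tip_label t \<noteq> wo_zero r"
    using tip_label_bounds(3)[OF t(1)] underS_nonempty_iff by blast
  then have stays: "stays_le_i (wo_zero r) (Suc ?n)"
    and le: "(wo_add r (wo_zero r) (Suc ?n), chain_bound t F) \<in> r"
    using wo_add_zero_Suc_le \<open>tip_label t \<in> Field r\<close> chain_bound_facts(3)[OF t]
    by (simp_all add: chain_bound_def)
  have "(wo_add r (wo_zero r) (Suc ?m), wo_add r (wo_zero r) (Suc ?n)) \<in> r"
    using wo_add_mono_steps[OF stays, of "Suc ?m"] \<open>?m \<le> ?n\<close> by (simp del: funpow.simps)
  then have "tree.rk (wo_add r (wo_zero r) (Suc ?m)) (insert x F)"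
    using tree.rk_ge_antimono[OF trans_r[OF _ le] rk] by blast
  moreover have "\<not> tree.rk (wo_add r (wo_zero r) (Suc ?m)) (insert x F)"
  proof (rule not_rk_ge_incomparable)
    show "insert x F \<subseteq> nodes"
      using x(1) t(3) prefix_set_subset_nodes[OF t(1)] by blast
    show "min t x \<parallel> max t x"
      using x(3) by (auto simp: min_def max_def parallel_def)
    have "t \<noteq> x"
      using x(3) by (auto simp: parallel_def)
    then show "min t x < max t x"
      by (cases "t \<le> x") (simp_all add: min_def max_def order.order_iff_strict)
    show "stays_le_i (wo_zero r) ?m"
      using stays_le_i_mono[OF stays] \<open>?m \<le> ?n\<close> by simp
  qed (use chain_bound_facts(1)[OF t] t(2) in \<open>auto simp: min_def max_def\<close>)
  ultimately show False
    by blast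
qed

lemma not_rk_ge_chain:
  "v = chain_bound t F \<Longrightarrow> tree_node r i t \<Longrightarrow> t \<in> F \<Longrightarrow> F \<subseteq> prefix_set t \<Longrightarrow>
    \<not> tree.rk (wo_succ r v) F"
proof (induction v arbitrary: t F rule: wf_induct[OF WF])
  case (1 v t F)
  note t = "1.prems"(2-4)
  have vi: "(v, i) \<in> r"
    using chain_bound_facts(4)[OF t] "1.prems"(1) by simp
  show ?case
  proof
    assume "tree.rk (wo_succ r v) F"
    then obtain x where "realizes nodes tree_arc F (\<lambda>_. False) x" and rk: "tree.rk v (insert x F)"
      using tree.rk_ge_succ_iff[OF aboveS_if_le_i[OF vi] FieldI1[OF vi]] by blast
    then have x: "tree_node r i x" "x \<notin> F"
      by (auto simp: realizes_def)
    consider "strict_prefix x t" | "strict_prefix t x" | "x \<parallel> t"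
      using prefix_cases[of x t] x(2) t(2) by (auto simp: strict_prefix_def)
    then show False
    proof cases
      case 1
      then have "x \<in> prefix_set t"
        using tree_node_nonempty[OF x(1)] by (auto simp: prefix_set_def strict_prefix_def)
      note less = chain_bound_insert_prefix[OF t this x(2)]
      have "insert x F \<subseteq> prefix_set t"
        using t(3) \<open>x \<in> prefix_set t\<close> by blast
      then have "\<not> tree.rk (wo_succ r (chain_bound t (insert x F))) (insert x F)"
        by (rule "1.IH"[rule_format, OF less(2)[folded "1.prems"(1)] refl t(1) insertI2[OF t(2)]])
      then show False
        using rk less(1) "1.prems"(1) by simp
    next
      case 2
      have "prefix_set t \<subseteq> prefix_set x"
        unfolding prefix_set_def using prefix_order.trans[of _ t x] 2 by (auto simp: strict_prefix_def)
      then have sub: "insert x F \<subseteq> prefix_set x"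
        using t(3) tree_node_nonempty[OF x(1)] by (auto simp: prefix_set_def)
      have less: "(chain_bound x (insert x F), v) \<in> r - Id"
        using chain_bound_insert_extension[OF t x(1) 2 x(2)] "1.prems"(1) by simp
      have "\<not> tree.rk (wo_succ r (chain_bound x (insert x F))) (insert x F)"
        using "1.IH"[rule_format, OF less refl x(1) insertI1 sub] .
      moreover have "(wo_succ r (chain_bound x (insert x F)), v) \<in> r"
        using wo_succ_least less by blast
      then have "tree.rk (wo_succ r (chain_bound x (insert x F))) (insert x F)"
        using tree.rk_ge_antimono rk by blast
      ultimately show False
        by blast
    next
      case 3
      then show False
        using not_rk_ge_chain_incomparable[OF t x] rk "1.prems"(1) by simp
    qed
  qed
qed

lemma not_rk_ge_succ_i: "\<not> tree.rk (wo_succ r i) {}"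
proof
  assume "tree.rk (wo_succ r i) {}"
  then obtain x where x: "realizes nodes tree_arc {} (\<lambda>_. False) x" and rk: "tree.rk i {x}"
    using tree.rk_ge_succ_iff[OF aboveS_i i_in_Field] by blast
  then have xn: "tree_node r i x"
    by (simp add: realizes_def)
  moreover have "x \<in> prefix_set x"
    using tree_node_nonempty[OF xn] by (simp add: prefix_set_def)
  ultimately have "(chain_bound x {x}, i) \<in> r" "chain_bound x {x} \<noteq> i"
    using wo_add_tip_label_less_i[OF xn, of "length x - 1"] tree_node_nonempty[OF xn]
    by (simp_all add: chain_bound_def)
  then have "(wo_succ r (chain_bound x {x}), i) \<in> r"
    using wo_succ_least by blast
  then have "tree.rk (wo_succ r (chain_bound x {x})) {x}"
    using tree.rk_ge_antimono rk by blast
  then show False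
    using not_rk_ge_chain[OF refl xn] \<open>x \<in> prefix_set x\<close> by blast
qed

lemma rank_eq_tree:
  assumes "wo_zero r \<noteq> i" and "wo_succ r (wo_zero r) \<noteq> i"
  shows "rank_eq r nodes tree_arc i"
proof -
  have "(wo_succ r (wo_zero r), i) \<in> r"
    using wo_succ_least wo_zero_least[OF i_in_Field] assms(1) by blast
  then have "tree_node r i [(0, wo_succ r (wo_zero r), [])]"
    using tree_node_single assms(2) wo_zero_less_succ by (auto simp: underS_def)
  then have "tree.rk i {}"
    using rk_ge_empty refl_r[OF i_in_Field] by blast
  then show ?thesis
    using not_rk_ge_succ_i by (simp add: rank_eq_def)
qed

end

context wo_bounded
begin

lemma rank_eq_empty_tournament:
  assumes "underS i = {}"
  shows "rank_eq r ({} :: 'v set) (\<lambda>_ _. False) i"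
proof -
  interpret empty: tournament_rank r "{} :: 'v set" "\<lambda>_ _. False"
    by unfold_locales (simp add: tournament_def)
  have "empty.rk i {}"
    using empty.rk_ge_zero_iff[OF assms] by (simp add: in_age_def)
  moreover have "\<not> empty.rk (wo_succ r i) {}"
    using empty.rk_ge_succ_iff[OF aboveS_i i_in_Field] by (simp add: realizes_def)
  ultimately show ?thesis
    by (simp add: rank_eq_def)
qed

lemma rank_eq_singleton_tournament:
  assumes "i = wo_succ r (wo_zero r)"
  shows "rank_eq r {v} (\<lambda>_ _. False) i"
proof -
  interpret single: tournament_rank r "{v}" "\<lambda>_ _. False"
    by unfold_locales (simp add: tournament_def)
  have "wo_succ r (wo_zero r) \<in> aboveS (wo_zero r)"
    using wo_zero_less_succ by (auto simp: aboveS_def)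
  then have zero: "aboveS (wo_zero r) \<noteq> {}" "wo_zero r \<in> Field r"
    using FieldI1 by (auto simp: aboveS_def)
  have "single.rk (wo_zero r) {v}"
    using single.rk_ge_zero_iff[OF underS_wo_zero] by (simp add: in_age_def)
  then have "single.rk i {}"
    using single.rk_ge_succ_iff[OF zero] assms by (simp add: realizes_def in_age_def)
  moreover have "\<not> single.rk (wo_succ r i) {}"
  proof
    assume "single.rk (wo_succ r i) {}"
    then have "single.rk i {v}"
      using single.rk_ge_succ_iff[OF aboveS_i i_in_Field] by (simp add: realizes_def)
    then show False
      using single.rk_ge_succ_iff[OF zero] assms by (simp add: realizes_def)
  qed
  ultimately show ?thesis
    by (simp add: rank_eq_def)
qed

end

lemma tournament_subsingleton: "V \<subseteq> {v} \<Longrightarrow> tournament V (\<lambda>_ _. False)"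
  by (auto simp: tournament_def)

lemma rank_eq_nat_copy:
  fixes V :: "'v::countable set"
  assumes "Well_order r" and "tournament V E" and "rank_eq r V E i"
  shows "\<exists>(V' :: nat set) E'. countable V' \<and> tournament V' E' \<and> rank_eq r V' E' i"
proof -
  let ?E = "\<lambda>m n. E (from_nat m) (from_nat n)"
  have inj: "inj_on to_nat V"
    by (simp add: inj_on_def)
  have "tournament (to_nat ` V) ?E" "rank_eq r (to_nat ` V) ?E i"
    using tournament_image[OF assms(2) inj] rank_eq_image[OF assms(1,2) inj _ assms(3)] by simp_all
  then show ?thesis
    by blast
qed

theorem corollary5p14:
  fixes r :: "nat rel" and i :: nat
  assumes "Well_order r" and "i \<in> Field r" and "aboveS r i \<noteq> {}"
  shows "\<exists>(V :: nat set) E. countable V \<and> tournament V E \<and> rank_eq r V E i"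
proof -
  interpret tree_tournament r i
    using assms by unfold_locales
  consider "i = wo_zero r" | "i = wo_succ r (wo_zero r)" | "wo_zero r \<noteq> i" "wo_succ r (wo_zero r) \<noteq> i"
    by blast
  then have "\<exists>(V :: nat node set) E. tournament V E \<and> rank_eq r V E i"
  proof cases
    case 1
    then have "rank_eq r ({} :: nat node set) (\<lambda>_ _. False) i"
      using rank_eq_empty_tournament underS_wo_zero by simp
    moreover have "tournament ({} :: nat node set) (\<lambda>_ _. False)"
      by (rule tournament_subsingleton) simp
    ultimately show ?thesis
      by blast
  next
    case 2
    then have "rank_eq r {[] :: nat node} (\<lambda>_ _. False) i"
      by (rule rank_eq_singleton_tournament)
    moreover have "tournament {[] :: nat node} (\<lambda>_ _. False)"
      by (rule tournament_subsingleton) simp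
    ultimately show ?thesis
      by blast
  next
    case 3
    then have "rank_eq r nodes tree_arc i"
      by (rule rank_eq_tree)
    then show ?thesis
      using tournament_tree_arc by blast
  qed
  then show ?thesis
    using rank_eq_nat_copy[OF assms(1)] by blast
qed

end
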